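(* Let $A$ be an algebra over a field $\Bbbk$. The $A$-bimodule $A$ (with structure map ${}_Am_A=m\circ(m\otimes 1):A\otimes A\otimes A\to A$) is projective in the category ${}_A\mathcal{M}_A$ of $A$-bimodules if and only if $A$ admits a normalized nearly Frobenius coproduct.
   Context: Algebras are associative and unital; tensor products over $\Bbbk$; $m$ denotes multiplication. A nearly Frobenius coproduct on $A$ is a $\Bbbk$-linear map $\Delta:A\to A\otimes A$ with $\Delta\circ m=(1\otimes m)\circ(\Delta\otimes 1)=(m\otimes 1)\circ(1\otimes\Delta)$; it is normalized if $m\circ\Delta=\operatorname{Id}_A$. *)

theory Defs
  imports Complex_Main
begin

definition kalgebra :: "('k::field \<Rightarrow> 'a::ring_1 \<Rightarrow> 'a) \<Rightarrow> bool" where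
  "kalgebra sm \<longleftrightarrow> vector_space sm \<and>
     (\<forall>c a b. sm c (a * b) = sm c a * b \<and> sm c (a * b) = a * sm c b)"

text \<open>An element of the n-fold tensor power of A is represented by a finitely supported
  formal 'k-linear combination of words of length n (a word [a1,...,an] standing for
  a1 (x) ... (x) an); two representatives denote the same tensor iff their difference lies
  in the 'k-span of the multilinearity relations.\<close>

definition tens_carrier :: "nat \<Rightarrow> ('a list \<Rightarrow> 'k::field) set" where
  "tens_carrier n = {f. finite {w. f w \<noteq> 0} \<and> (\<forall>w. f w \<noteq> 0 \<longrightarrow> length w = n)}"

definition delta :: "'a list \<Rightarrow> ('a list \<Rightarrow> 'k::field)" where
  "delta v = (\<lambda>u. if u = v then 1 else 0)"

definition tens_gens :: "('k::field \<Rightarrow> 'a::ring_1 \<Rightarrow> 'a) \<Rightarrow> nat \<Rightarrow> ('a list \<Rightarrow> 'k) set" where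
  "tens_gens sm n =
     {(\<lambda>u. delta (w[j := x + y]) u - delta (w[j := x]) u - delta (w[j := y]) u) | w j x y.
        length w = n \<and> j < n}
   \<union> {(\<lambda>u. delta (w[j := sm c x]) u - c * delta (w[j := x]) u) | w j c x.
        length w = n \<and> j < n}"

inductive_set tens_rel :: "('k::field \<Rightarrow> 'a::ring_1 \<Rightarrow> 'a) \<Rightarrow> nat \<Rightarrow> ('a list \<Rightarrow> 'k) set"
  for sm n where
  zero: "(\<lambda>u. 0) \<in> tens_rel sm n"
| gen: "g \<in> tens_gens sm n \<Longrightarrow> g \<in> tens_rel sm n"
| add: "f \<in> tens_rel sm n \<Longrightarrow> g \<in> tens_rel sm n \<Longrightarrow> (\<lambda>u. f u + g u) \<in> tens_rel sm n"
| scale: "f \<in> tens_rel sm n \<Longrightarrow> (\<lambda>u. c * f u) \<in> tens_rel sm n"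

definition teq :: "('k::field \<Rightarrow> 'a::ring_1 \<Rightarrow> 'a) \<Rightarrow> nat \<Rightarrow> ('a list \<Rightarrow> 'k) \<Rightarrow> ('a list \<Rightarrow> 'k) \<Rightarrow> bool" where
  "teq sm n f g \<longleftrightarrow> (\<lambda>u. f u - g u) \<in> tens_rel sm n"

definition lin_ext :: "('a list \<Rightarrow> ('b list \<Rightarrow> 'k::field)) \<Rightarrow> ('a list \<Rightarrow> 'k) \<Rightarrow> ('b list \<Rightarrow> 'k)" where
  "lin_ext G f = (\<lambda>u. \<Sum>w\<in>{w. f w \<noteq> 0}. f w * G w u)"

text \<open>phi (x) b and a (x) phi for phi a tensor and a, b in A.\<close>
definition rtens :: "('a list \<Rightarrow> 'k::field) \<Rightarrow> 'a \<Rightarrow> ('a list \<Rightarrow> 'k)" where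
  "rtens phi b = (\<lambda>u. if u \<noteq> [] \<and> last u = b then phi (butlast u) else 0)"

definition ltens :: "'a \<Rightarrow> ('a list \<Rightarrow> 'k::field) \<Rightarrow> ('a list \<Rightarrow> 'k)" where
  "ltens a phi = (\<lambda>u. case u of [] \<Rightarrow> 0 | x # r \<Rightarrow> if x = a then phi r else 0)"

definition mult_tens :: "('k::field \<Rightarrow> 'a::ring_1 \<Rightarrow> 'a) \<Rightarrow> ('a list \<Rightarrow> 'k) \<Rightarrow> 'a" where
  "mult_tens sm f = (\<Sum>w\<in>{w. f w \<noteq> 0}. sm (f w) (w ! 0 * w ! 1))"

definition id_m :: "('a::ring_1 list \<Rightarrow> 'k::field) \<Rightarrow> ('a list \<Rightarrow> 'k)" where
  "id_m = lin_ext (\<lambda>w. delta [w ! 0, w ! 1 * w ! 2])"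

definition m_id :: "('a::ring_1 list \<Rightarrow> 'k::field) \<Rightarrow> ('a list \<Rightarrow> 'k)" where
  "m_id = lin_ext (\<lambda>w. delta [w ! 0 * w ! 1, w ! 2])"

definition kLinear_coproduct ::
  "('k::field \<Rightarrow> 'a::ring_1 \<Rightarrow> 'a) \<Rightarrow> ('a \<Rightarrow> ('a list \<Rightarrow> 'k)) \<Rightarrow> bool" where
  "kLinear_coproduct sm D \<longleftrightarrow>
     (\<forall>a. D a \<in> tens_carrier 2) \<and>
     (\<forall>a b. teq sm 2 (D (a + b)) (\<lambda>u. D a u + D b u)) \<and>
     (\<forall>c a. teq sm 2 (D (sm c a)) (\<lambda>u. c * D a u))"

definition nearly_frobenius ::
  "('k::field \<Rightarrow> 'a::ring_1 \<Rightarrow> 'a) \<Rightarrow> ('a \<Rightarrow> ('a list \<Rightarrow> 'k)) \<Rightarrow> bool" where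
  "nearly_frobenius sm D \<longleftrightarrow> kLinear_coproduct sm D \<and>
     (\<forall>f \<in> tens_carrier 2.
        teq sm 2 (lin_ext (\<lambda>w. D (w ! 0 * w ! 1)) f)
                 (id_m (lin_ext (\<lambda>w. rtens (D (w ! 0)) (w ! 1)) f)) \<and>
        teq sm 2 (lin_ext (\<lambda>w. D (w ! 0 * w ! 1)) f)
                 (m_id (lin_ext (\<lambda>w. ltens (w ! 0) (D (w ! 1))) f)))"

definition normalized_nearly_frobenius ::
  "('k::field \<Rightarrow> 'a::ring_1 \<Rightarrow> 'a) \<Rightarrow> ('a \<Rightarrow> ('a list \<Rightarrow> 'k)) \<Rightarrow> bool" where
  "normalized_nearly_frobenius sm D \<longleftrightarrow> nearly_frobenius sm D \<and> (\<forall>a. mult_tens sm (D a) = a)"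

record ('a, 'm) bimod =
  bcarrier :: "'m set"
  badd :: "'m \<Rightarrow> 'm \<Rightarrow> 'm"
  bzero :: 'm
  blact :: "'a \<Rightarrow> 'm \<Rightarrow> 'm"
  bract :: "'m \<Rightarrow> 'a \<Rightarrow> 'm"

text \<open>The 'k-vector space structure is c\<cdot>x = (c\<cdot>1)\<cdot>x,
  so that all structure maps are 'k-linear.\<close>
definition bimodule :: "('k::field \<Rightarrow> 'a::ring_1 \<Rightarrow> 'a) \<Rightarrow> ('a, 'm) bimod \<Rightarrow> bool" where
  "bimodule sm M \<longleftrightarrow>
     (let C = bcarrier M; p = badd M; z = bzero M; l = blact M; r = bract M in
       z \<in> C \<and> (\<forall>x\<in>C. \<forall>y\<in>C. p x y \<in> C) \<and>
       (\<forall>x\<in>C. \<forall>y\<in>C. \<forall>w\<in>C. p (p x y) w = p x (p y w)) \<and>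
       (\<forall>x\<in>C. \<forall>y\<in>C. p x y = p y x) \<and>
       (\<forall>x\<in>C. p z x = x) \<and>
       (\<forall>x\<in>C. \<exists>y\<in>C. p x y = z) \<and>
       (\<forall>a. \<forall>x\<in>C. l a x \<in> C \<and> r x a \<in> C) \<and>
       (\<forall>a. \<forall>x\<in>C. \<forall>y\<in>C. l a (p x y) = p (l a x) (l a y) \<and> r (p x y) a = p (r x a) (r y a)) \<and>
       (\<forall>a b. \<forall>x\<in>C. l (a + b) x = p (l a x) (l b x) \<and> r x (a + b) = p (r x a) (r x b)) \<and>
       (\<forall>a b. \<forall>x\<in>C. l a (l b x) = l (a * b) x \<and> r (r x a) b = r x (a * b)) \<and>
       (\<forall>a b. \<forall>x\<in>C. r (l a x) b = l a (r x b)) \<and>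
       (\<forall>x\<in>C. l 1 x = x \<and> r x 1 = x) \<and>
       (\<forall>c. \<forall>x\<in>C. l (sm c 1) x = r x (sm c 1)))"

definition bimod_hom :: "('a, 'm) bimod \<Rightarrow> ('a, 'n) bimod \<Rightarrow> ('m \<Rightarrow> 'n) \<Rightarrow> bool" where
  "bimod_hom M N f \<longleftrightarrow>
     (\<forall>x\<in>bcarrier M. f x \<in> bcarrier N) \<and>
     (\<forall>x\<in>bcarrier M. \<forall>y\<in>bcarrier M. f (badd M x y) = badd N (f x) (f y)) \<and>
     (\<forall>a. \<forall>x\<in>bcarrier M. f (blact M a x) = blact N a (f x) \<and> f (bract M x a) = bract N (f x) a)"

definition regular_bimod :: "('a::ring_1, 'a) bimod" where
  "regular_bimod = \<lparr>bcarrier = UNIV, badd = (+), bzero = 0, blact = (*), bract = (*)\<rparr>"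

text \<open>Projectivity of the regular bimodule, tested against all bimodule epimorphisms
  g : M \<rightarrow> N with M, N carried by (subsets of) the types 'm and 'n.\<close>
definition projective_regular ::
  "('k::field \<Rightarrow> 'a::ring_1 \<Rightarrow> 'a) \<Rightarrow> 'm itself \<Rightarrow> 'n itself \<Rightarrow> bool" where
  "projective_regular sm _ _ \<longleftrightarrow>
     (\<forall>(M :: ('a, 'm) bimod) (N :: ('a, 'n) bimod) g f.
        bimodule sm M \<and> bimodule sm N \<and> bimod_hom M N g \<and> g ` bcarrier M = bcarrier N \<and>
        bimod_hom regular_bimod N f \<longrightarrow>
        (\<exists>h. bimod_hom regular_bimod M h \<and> (\<forall>a. g (h a) = f a)))"

end

theory Submission
  imports Defs "HOL-Algebra.FiniteProduct"
begin

text \<open>If \<open>\<Delta>\<close> is a normalized nearly Frobenius coproduct and \<open>g : M \<rightarrow> N\<close> is a bimodule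
  epimorphism, a map \<open>f : A \<rightarrow> N\<close> lifts as follows: choose \<open>x\<close> with \<open>g x = f 1\<close> and send
  \<open>a\<close> to \<open>\<Sum> a' x a''\<close>, where \<open>\<Delta> a = \<Sum> a' \<otimes> a''\<close>. This is a bimodule map because the
  nearly Frobenius identities say exactly that \<open>\<Delta>\<close> is one, and applying \<open>g\<close> gives
  \<open>f (m (\<Delta> a)) = f a\<close>. Conversely, \<open>m : A \<otimes> A \<rightarrow> A\<close> is a bimodule epimorphism, so
  projectivity of \<open>A\<close> provides a bimodule section of \<open>m\<close>, which is a normalized nearly
  Frobenius coproduct for the same reason.\<close>

abbreviation supp :: "('b \<Rightarrow> 'k::zero) \<Rightarrow> 'b set" where
  "supp f \<equiv> {w. f w \<noteq> 0}"

lemma supp_delta [simp]: "supp (delta v :: 'a list \<Rightarrow> 'k::field) = {v}"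
  by (auto simp: delta_def)

lemma finite_supp_add:
  "finite (supp f) \<Longrightarrow> finite (supp g) \<Longrightarrow> finite (supp (\<lambda>w. f w + g w :: 'k::field))"
  by (rule finite_subset[of _ "supp f \<union> supp g"]) auto

lemma finite_supp_diff:
  "finite (supp f) \<Longrightarrow> finite (supp g) \<Longrightarrow> finite (supp (\<lambda>w. f w - g w :: 'k::field))"
  by (rule finite_subset[of _ "supp f \<union> supp g"]) auto

lemma finite_supp_scale: "finite (supp f) \<Longrightarrow> finite (supp (\<lambda>w. c * f w :: 'k::field))"
  by (rule finite_subset[of _ "supp f"]) auto

lemma finite_supp_sum:
  assumes "finite S" "\<And>w. w \<in> S \<Longrightarrow> finite (supp (H w))"
  shows "finite (supp (\<lambda>u. \<Sum>w\<in>S. c w * H w u :: 'k::field))"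
proof (rule finite_subset[of _ "\<Union>w\<in>S. supp (H w)"])
  show "supp (\<lambda>u. \<Sum>w\<in>S. c w * H w u) \<subseteq> (\<Union>w\<in>S. supp (H w))"
    by (auto intro: ccontr simp: sum.neutral)
qed (use assms in auto)

lemma lin_ext_superset:
  assumes "finite S" "supp f \<subseteq> S"
  shows "lin_ext G f u = (\<Sum>w\<in>S. f w * G w u)"
  unfolding lin_ext_def by (rule sum.mono_neutral_left) (use assms in auto)

lemma lin_ext_add:
  assumes "finite (supp f)" "finite (supp g)"
  shows "lin_ext G (\<lambda>u. f u + g u) = (\<lambda>u. lin_ext G f u + lin_ext G g u)"
proof
  fix u
  let ?S = "supp f \<union> supp g"
  have "lin_ext G (\<lambda>u. f u + g u) u = (\<Sum>w\<in>?S. (f w + g w) * G w u)"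
    by (rule lin_ext_superset) (use assms in auto)
  also have "\<dots> = (\<Sum>w\<in>?S. f w * G w u) + (\<Sum>w\<in>?S. g w * G w u)"
    by (simp add: distrib_right sum.distrib)
  also have "\<dots> = lin_ext G f u + lin_ext G g u"
    by (subst (1 2) lin_ext_superset[of ?S]) (use assms in auto)
  finally show "lin_ext G (\<lambda>u. f u + g u) u = lin_ext G f u + lin_ext G g u" .
qed

lemma lin_ext_scale:
  assumes "finite (supp f)"
  shows "lin_ext G (\<lambda>u. c * f u) = (\<lambda>u. c * lin_ext G f u)"
proof
  fix u
  have "lin_ext G (\<lambda>u. c * f u) u = (\<Sum>w\<in>supp f. (c * f w) * G w u)"
    by (rule lin_ext_superset) (use assms in auto)
  then show "lin_ext G (\<lambda>u. c * f u) u = c * lin_ext G f u"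
    by (simp add: lin_ext_def sum_distrib_left mult.assoc)
qed

lemma lin_ext_diff:
  assumes "finite (supp f)" "finite (supp g)"
  shows "lin_ext G (\<lambda>u. f u - g u) = (\<lambda>u. lin_ext G f u - lin_ext G g u)"
  using lin_ext_add[OF assms(1) finite_supp_scale[OF assms(2)], of G "-1"]
    lin_ext_scale[OF assms(2), of G "-1"]
  by simp

lemma lin_ext_zero [simp]: "lin_ext G (\<lambda>u. 0) = (\<lambda>u. 0)"
  by (simp add: lin_ext_def)

lemma lin_ext_delta [simp]: "lin_ext G (delta v) = G v"
  by (simp add: lin_ext_def delta_def)

lemma lin_ext_delta_diff:
  "lin_ext G (\<lambda>u. delta p u - delta q u - delta r u) = (\<lambda>u. G p u - G q u - G r u)"
proof -
  have pq: "finite (supp (\<lambda>u. delta p u - delta q u :: 'k::field))"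
    by (rule finite_supp_diff) simp_all
  show ?thesis
    by (simp add: lin_ext_diff[OF pq] lin_ext_diff)
qed

lemma lin_ext_delta_diff_scale:
  "lin_ext G (\<lambda>u. delta p u - c * delta q u) = (\<lambda>u. G p u - c * G q u :: 'k::field)"
  by (simp add: lin_ext_diff lin_ext_scale finite_supp_scale)

lemma lin_ext_delta_id:
  assumes "finite (supp f)"
  shows "lin_ext delta f = f"
proof
  fix u
  have "lin_ext delta f u = (\<Sum>w\<in>supp f. if u = w then f w else 0)"
    unfolding lin_ext_def delta_def by (rule sum.cong) auto
  then show "lin_ext delta f u = f u"
    using assms by (simp add: sum.delta)
qed

lemma lin_ext_cong: "(\<And>w. f w \<noteq> 0 \<Longrightarrow> G w = G' w) \<Longrightarrow> lin_ext G f = lin_ext G' f"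
  unfolding lin_ext_def by (rule ext, rule sum.cong) auto

lemma lin_ext_map_add: "(\<lambda>u. lin_ext G f u + lin_ext H f u) = lin_ext (\<lambda>w u. G w u + H w u) f"
  unfolding lin_ext_def by (rule ext) (simp add: distrib_left sum.distrib)

lemma lin_ext_map_diff: "(\<lambda>u. lin_ext G f u - lin_ext H f u) = lin_ext (\<lambda>w u. G w u - H w u) f"
  unfolding lin_ext_def by (rule ext) (simp add: right_diff_distrib sum_subtractf)

lemma lin_ext_map_scale: "(\<lambda>u. c * lin_ext G f u) = lin_ext (\<lambda>w u. c * G w u) f"
  unfolding lin_ext_def by (rule ext) (simp add: sum_distrib_left algebra_simps)

lemma lin_ext_sum:
  assumes "finite S" "\<And>w. w \<in> S \<Longrightarrow> finite (supp (H w))"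
  shows "lin_ext G (\<lambda>u. \<Sum>w\<in>S. c w * H w u) = (\<lambda>u. \<Sum>w\<in>S. c w * lin_ext G (H w) u)"
  using assms
proof (induction S rule: finite_induct)
  case (insert a S)
  have "lin_ext G (\<lambda>u. \<Sum>w\<in>insert a S. c w * H w u)
      = lin_ext G (\<lambda>u. c a * H a u + (\<Sum>w\<in>S. c w * H w u))"
    using insert by simp
  also have "\<dots> = (\<lambda>u. c a * lin_ext G (H a) u + lin_ext G (\<lambda>u. \<Sum>w\<in>S. c w * H w u) u)"
    using insert by (simp add: lin_ext_add lin_ext_scale finite_supp_scale finite_supp_sum)
  finally show ?case
    using insert by simp
qed simp

lemma lin_ext_lin_ext:
  assumes "finite (supp f)" "\<And>w. f w \<noteq> 0 \<Longrightarrow> finite (supp (H w))"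
  shows "lin_ext G (lin_ext H f) = lin_ext (\<lambda>w. lin_ext G (H w)) f"
  unfolding lin_ext_def[of H] using assms
  by (subst lin_ext_sum) (auto simp: lin_ext_def)

lemma tens_carrier_finite: "f \<in> tens_carrier n \<Longrightarrow> finite (supp f)"
  by (simp add: tens_carrier_def)

lemma tens_carrier_length: "f \<in> tens_carrier n \<Longrightarrow> f w \<noteq> 0 \<Longrightarrow> length w = n"
  by (simp add: tens_carrier_def)

lemma tens_carrier_supp_subset:
  assumes "f \<in> tens_carrier n" "g \<in> tens_carrier n" "supp h \<subseteq> supp f \<union> supp g"
  shows "h \<in> tens_carrier n"
  using assms unfolding tens_carrier_def by (auto intro: finite_subset)

lemma tens_carrier_add:
  "f \<in> tens_carrier n \<Longrightarrow> g \<in> tens_carrier n \<Longrightarrow> (\<lambda>u. f u + g u) \<in> tens_carrier n"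
  by (erule tens_carrier_supp_subset) auto

lemma tens_carrier_diff:
  "f \<in> tens_carrier n \<Longrightarrow> g \<in> tens_carrier n \<Longrightarrow> (\<lambda>u. f u - g u) \<in> tens_carrier n"
  by (erule tens_carrier_supp_subset) auto

lemma tens_carrier_scale: "f \<in> tens_carrier n \<Longrightarrow> (\<lambda>u. c * f u) \<in> tens_carrier n"
  by (rule tens_carrier_supp_subset[of f n f]) auto

lemma tens_carrier_zero: "(\<lambda>u. 0) \<in> tens_carrier n"
  unfolding tens_carrier_def by simp

lemma tens_carrier_delta: "length v = n \<Longrightarrow> delta v \<in> tens_carrier n"
  unfolding tens_carrier_def by (simp add: delta_def)

lemma tens_carrier_lin_ext:
  assumes "finite (supp f)" "\<And>w. f w \<noteq> 0 \<Longrightarrow> G w \<in> tens_carrier n"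
  shows "lin_ext G f \<in> tens_carrier n"
proof -
  have "finite (supp (lin_ext G f))"
    unfolding lin_ext_def
    by (rule finite_supp_sum) (use assms in \<open>auto dest: tens_carrier_finite\<close>)
  moreover have "length u = n" if "lin_ext G f u \<noteq> 0" for u
  proof -
    from that obtain w where "f w \<noteq> 0" "f w * G w u \<noteq> 0"
      unfolding lin_ext_def by (metis (mono_tags, lifting) mem_Collect_eq sum.neutral)
    then show ?thesis
      using assms(2) tens_carrier_length by fastforce
  qed
  ultimately show ?thesis
    by (simp add: tens_carrier_def)
qed

lemma tens_gens_carrier: "g \<in> tens_gens sm n \<Longrightarrow> g \<in> tens_carrier n"
  unfolding tens_gens_def by (auto intro!: tens_carrier_diff tens_carrier_delta tens_carrier_scale)

lemma tens_rel_carrier: "f \<in> tens_rel sm n \<Longrightarrow> f \<in> tens_carrier n"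
  by (induction rule: tens_rel.induct)
    (auto intro: tens_carrier_zero tens_gens_carrier tens_carrier_add tens_carrier_scale)

lemma tens_rel_finite: "f \<in> tens_rel sm n \<Longrightarrow> finite (supp f)"
  by (rule tens_carrier_finite[OF tens_rel_carrier])

lemma tens_rel_sum:
  assumes "finite S" "\<And>w. w \<in> S \<Longrightarrow> H w \<in> tens_rel sm n"
  shows "(\<lambda>u. \<Sum>w\<in>S. c w * H w u) \<in> tens_rel sm n"
  using assms
proof (induction S rule: finite_induct)
  case (insert a S)
  then have "(\<lambda>u. c a * H a u + (\<Sum>w\<in>S. c w * H w u)) \<in> tens_rel sm n"
    by (intro tens_rel.add[where f = "\<lambda>u. c a * H a u"] tens_rel.scale) auto
  then show ?case
    using insert by simp
qed (simp add: tens_rel.zero)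

lemma tens_rel_lin_ext:
  assumes "finite (supp f)" "\<And>w. f w \<noteq> 0 \<Longrightarrow> G w \<in> tens_rel sm n"
  shows "lin_ext G f \<in> tens_rel sm n"
  unfolding lin_ext_def by (rule tens_rel_sum) (use assms in auto)

lemma length_2E:
  assumes "length w = 2"
  obtains p q where "w = [p, q]"
  using assms by (metis One_nat_def Suc_1 length_0_conv length_Suc_conv)

lemma tens_gensI_add:
  "length w = n \<Longrightarrow> j < n \<Longrightarrow>
    (\<lambda>u. delta (w[j := x + y]) u - delta (w[j := x]) u - delta (w[j := y]) u) \<in> tens_gens sm n"
  unfolding tens_gens_def by blast

lemma tens_gensI_smult:
  "length w = n \<Longrightarrow> j < n \<Longrightarrow>
    (\<lambda>u. delta (w[j := sm c x]) u - c * delta (w[j := x]) u) \<in> tens_gens sm n"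
  unfolding tens_gens_def by blast

lemma tens_rel_add_fst: "(\<lambda>u. delta [x + y, b] u - delta [x, b] u - delta [y, b] u) \<in> tens_rel sm 2"
  using tens_rel.gen[OF tens_gensI_add[of "[x, b]" 2 0 x y]] by simp

lemma tens_rel_add_snd: "(\<lambda>u. delta [b, x + y] u - delta [b, x] u - delta [b, y] u) \<in> tens_rel sm 2"
  using tens_rel.gen[OF tens_gensI_add[of "[b, x]" 2 1 x y]] by simp

lemma tens_rel_smult_fst: "(\<lambda>u. delta [sm c x, b] u - c * delta [x, b] u) \<in> tens_rel sm 2"
  using tens_rel.gen[OF tens_gensI_smult[of "[x, b]" 2 0 sm c x]] by simp

lemma tens_rel_smult_snd: "(\<lambda>u. delta [b, sm c x] u - c * delta [b, x] u) \<in> tens_rel sm 2"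
  using tens_rel.gen[OF tens_gensI_smult[of "[b, x]" 2 1 sm c x]] by simp

lemma tens_gens_2E:
  assumes "g \<in> tens_gens sm 2"
  obtains a x y where "g = (\<lambda>u. delta [x + y, a] u - delta [x, a] u - delta [y, a] u)"
  | a x y where "g = (\<lambda>u. delta [a, x + y] u - delta [a, x] u - delta [a, y] u)"
  | a c x where "g = (\<lambda>u. delta [sm c x, a] u - c * delta [x, a] u)"
  | a c x where "g = (\<lambda>u. delta [a, sm c x] u - c * delta [a, x] u)"
proof -
  have index_2: "j < 2 \<Longrightarrow> j = 0 \<or> j = 1" for j :: nat
    by auto
  from assms consider
      (add) w j x y where "length w = 2" "j < 2"
        "g = (\<lambda>u. delta (w[j := x + y]) u - delta (w[j := x]) u - delta (w[j := y]) u)"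
    | (smult) w j c x where "length w = 2" "j < 2"
        "g = (\<lambda>u. delta (w[j := sm c x]) u - c * delta (w[j := x]) u)"
    unfolding tens_gens_def by blast
  then show ?thesis
  proof cases
    case (add w j x y)
    then obtain p q where "w = [p, q]"
      by (auto elim: length_2E)
    from index_2[OF add(2)] show ?thesis
      using add \<open>w = [p, q]\<close> that(1)[of x y q] that(2)[of p x y] by auto
  next
    case (smult w j c x)
    then obtain p q where "w = [p, q]"
      by (auto elim: length_2E)
    from index_2[OF smult(2)] show ?thesis
      using smult \<open>w = [p, q]\<close> that(3)[of c x q] that(4)[of p c x] by auto
  qed
qed

lemma teq_refl: "teq sm n f f"
  unfolding teq_def using tens_rel.zero by simp

lemma teq_sym: "teq sm n f g \<Longrightarrow> teq sm n g f"
  unfolding teq_def using tens_rel.scale[of "\<lambda>u. f u - g u" sm n "-1"] by simp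

lemma teq_trans: "teq sm n f g \<Longrightarrow> teq sm n g h \<Longrightarrow> teq sm n f h"
  unfolding teq_def using tens_rel.add[of "\<lambda>u. f u - g u" sm n "\<lambda>u. g u - h u"] by simp

lemma teq_add: "teq sm n f f' \<Longrightarrow> teq sm n g g' \<Longrightarrow> teq sm n (\<lambda>u. f u + g u) (\<lambda>u. f' u + g' u)"
  unfolding teq_def using tens_rel.add[of "\<lambda>u. f u - f' u" sm n "\<lambda>u. g u - g' u"]
  by (simp add: algebra_simps)

lemma teq_lin_ext:
  assumes "finite (supp f)" "\<And>w. f w \<noteq> 0 \<Longrightarrow> teq sm n (G w) (H w)"
  shows "teq sm n (lin_ext G f) (lin_ext H f)"
  unfolding teq_def lin_ext_map_diff
  by (rule tens_rel_lin_ext) (use assms in \<open>auto simp: teq_def\<close>)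

lemma lin_ext_preserves_tens_rel:
  assumes "\<And>g. g \<in> tens_gens sm n \<Longrightarrow> lin_ext G g \<in> tens_rel sm n"
  shows "f \<in> tens_rel sm n \<Longrightarrow> lin_ext G f \<in> tens_rel sm n"
proof (induction rule: tens_rel.induct)
  case (add f g)
  then show ?case
    by (simp add: lin_ext_add tens_rel_finite tens_rel.add)
next
  case (scale f c)
  then show ?case
    by (simp add: lin_ext_scale tens_rel_finite tens_rel.scale)
qed (simp_all add: assms tens_rel.zero)

section \<open>The bimodule structure of \<open>A \<otimes> A\<close>\<close>

definition tens_lmult :: "'a::ring_1 \<Rightarrow> ('a list \<Rightarrow> 'k::field) \<Rightarrow> ('a list \<Rightarrow> 'k)" where
  "tens_lmult a f = lin_ext (\<lambda>w. delta [a * w!0, w!1]) f"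

definition tens_rmult :: "'a::ring_1 \<Rightarrow> ('a list \<Rightarrow> 'k::field) \<Rightarrow> ('a list \<Rightarrow> 'k)" where
  "tens_rmult b f = lin_ext (\<lambda>w. delta [w!0, w!1 * b]) f"

lemma tens_carrier_delta_2: "delta [a, b] \<in> tens_carrier 2"
  by (rule tens_carrier_delta) simp

lemma tens_lmult_carrier: "f \<in> tens_carrier 2 \<Longrightarrow> tens_lmult a f \<in> tens_carrier 2"
  unfolding tens_lmult_def
  by (rule tens_carrier_lin_ext) (auto dest: tens_carrier_finite intro: tens_carrier_delta_2)

lemma tens_rmult_carrier: "f \<in> tens_carrier 2 \<Longrightarrow> tens_rmult b f \<in> tens_carrier 2"
  unfolding tens_rmult_def
  by (rule tens_carrier_lin_ext) (auto dest: tens_carrier_finite intro: tens_carrier_delta_2)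

lemma tens_lmult_add:
  "f \<in> tens_carrier 2 \<Longrightarrow> g \<in> tens_carrier 2 \<Longrightarrow>
    tens_lmult a (\<lambda>u. f u + g u) = (\<lambda>u. tens_lmult a f u + tens_lmult a g u)"
  unfolding tens_lmult_def by (rule lin_ext_add) (auto dest: tens_carrier_finite)

lemma tens_rmult_add:
  "f \<in> tens_carrier 2 \<Longrightarrow> g \<in> tens_carrier 2 \<Longrightarrow>
    tens_rmult b (\<lambda>u. f u + g u) = (\<lambda>u. tens_rmult b f u + tens_rmult b g u)"
  unfolding tens_rmult_def by (rule lin_ext_add) (auto dest: tens_carrier_finite)

lemma tens_lmult_lmult: "f \<in> tens_carrier 2 \<Longrightarrow> tens_lmult a (tens_lmult b f) = tens_lmult (a * b) f"
  unfolding tens_lmult_def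
  by (subst lin_ext_lin_ext) (auto dest: tens_carrier_finite simp: mult.assoc)

lemma tens_rmult_rmult: "f \<in> tens_carrier 2 \<Longrightarrow> tens_rmult b (tens_rmult a f) = tens_rmult (a * b) f"
  unfolding tens_rmult_def
  by (subst lin_ext_lin_ext) (auto dest: tens_carrier_finite simp: mult.assoc)

lemma tens_rmult_lmult: "f \<in> tens_carrier 2 \<Longrightarrow> tens_rmult b (tens_lmult a f) = tens_lmult a (tens_rmult b f)"
  unfolding tens_rmult_def tens_lmult_def
  by (subst (1 2) lin_ext_lin_ext) (auto dest: tens_carrier_finite)

lemma lin_ext_cong_2:
  assumes "f \<in> tens_carrier 2" "\<And>p q. G [p, q] = H [p, q]"
  shows "lin_ext G f = lin_ext H f"
proof (rule lin_ext_cong)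
  fix w
  assume "f w \<noteq> 0"
  then obtain p q where "w = [p, q]"
    using tens_carrier_length[OF assms(1)] by (blast elim: length_2E)
  then show "G w = H w"
    using assms(2) by simp
qed

lemma tens_lmult_one: "f \<in> tens_carrier 2 \<Longrightarrow> tens_lmult 1 f = f"
  unfolding tens_lmult_def
  by (subst lin_ext_cong_2[where H = delta]) (auto simp: lin_ext_delta_id tens_carrier_finite)

lemma tens_rmult_one: "f \<in> tens_carrier 2 \<Longrightarrow> tens_rmult 1 f = f"
  unfolding tens_rmult_def
  by (subst lin_ext_cong_2[where H = delta]) (auto simp: lin_ext_delta_id tens_carrier_finite)

lemma tens_lmult_plus:
  assumes "f \<in> tens_carrier 2"
  shows "teq sm 2 (tens_lmult (a + b) f) (\<lambda>u. tens_lmult a f u + tens_lmult b f u)"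
  unfolding tens_lmult_def lin_ext_map_add
proof (rule teq_lin_ext)
  fix w
  show "teq sm 2 (delta [(a + b) * w!0, w!1]) (\<lambda>u. delta [a * w!0, w!1] u + delta [b * w!0, w!1] u)"
    using tens_rel_add_fst[of "a * w!0" "b * w!0" "w!1" sm] by (simp add: teq_def distrib_right diff_diff_eq)
qed (rule tens_carrier_finite[OF assms])

lemma tens_rmult_plus:
  assumes "f \<in> tens_carrier 2"
  shows "teq sm 2 (tens_rmult (a + b) f) (\<lambda>u. tens_rmult a f u + tens_rmult b f u)"
  unfolding tens_rmult_def lin_ext_map_add
proof (rule teq_lin_ext)
  fix w
  show "teq sm 2 (delta [w!0, w!1 * (a + b)]) (\<lambda>u. delta [w!0, w!1 * a] u + delta [w!0, w!1 * b] u)"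
    using tens_rel_add_snd[of "w!0" "w!1 * a" "w!1 * b" sm] by (simp add: teq_def distrib_left diff_diff_eq)
qed (rule tens_carrier_finite[OF assms])

lemma supp_rtens: "supp (rtens f b) = (\<lambda>r. r @ [b]) ` supp f"
  by (auto simp: rtens_def image_iff intro: append_butlast_last_id[symmetric])

lemma supp_ltens: "supp (ltens a f) = (\<lambda>r. a # r) ` supp f"
proof (rule subset_antisym; rule subsetI)
  fix w
  assume "w \<in> supp (ltens a f)"
  then show "w \<in> (\<lambda>r. a # r) ` supp f"
    by (cases w) (auto simp: ltens_def split: if_splits)
qed (auto simp: ltens_def)

lemma id_m_rtens:
  assumes "f \<in> tens_carrier 2"
  shows "id_m (rtens f b) = tens_rmult b f"
proof -
  have "id_m (rtens f b) = (\<lambda>u. \<Sum>r\<in>supp f. f r * delta [(r @ [b])!0, (r @ [b])!1 * (r @ [b])!2] u)"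
    unfolding id_m_def lin_ext_def supp_rtens
    by (rule ext, subst sum.reindex) (auto simp: inj_on_def rtens_def)
  also have "\<dots> = (\<lambda>u. \<Sum>r\<in>supp f. f r * delta [r!0, r!1 * b] u)"
  proof (rule ext, rule sum.cong)
    fix u r
    assume "r \<in> supp f"
    then obtain p q where "r = [p, q]"
      using tens_carrier_length[OF assms] by (blast elim: length_2E)
    then show "f r * delta [(r @ [b])!0, (r @ [b])!1 * (r @ [b])!2] u = f r * delta [r!0, r!1 * b] u"
      by simp
  qed simp
  finally show ?thesis
    by (simp add: tens_rmult_def lin_ext_def)
qed

lemma m_id_ltens: "m_id (ltens a f) = tens_lmult a f"
  unfolding m_id_def tens_lmult_def lin_ext_def supp_ltens
  by (rule ext, subst sum.reindex) (auto simp: inj_on_def ltens_def numeral_2_eq_2)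

lemma nearly_frobenius_iff:
  "nearly_frobenius sm D \<longleftrightarrow> kLinear_coproduct sm D \<and>
     (\<forall>a b. teq sm 2 (D (a * b)) (tens_rmult b (D a))) \<and>
     (\<forall>a b. teq sm 2 (D (a * b)) (tens_lmult a (D b)))"
proof (intro iffI conjI allI; (elim conjE)?)
  assume nf: "nearly_frobenius sm D"
  then show lin: "kLinear_coproduct sm D"
    by (simp add: nearly_frobenius_def)
  fix a b
  have D_carrier: "D a \<in> tens_carrier 2"
    using lin by (simp add: kLinear_coproduct_def)
  from nf show "teq sm 2 (D (a * b)) (tens_rmult b (D a))"
    "teq sm 2 (D (a * b)) (tens_lmult a (D b))"
    unfolding nearly_frobenius_def
    using tens_carrier_delta_2[of a b] by (auto simp: id_m_rtens[OF D_carrier] m_id_ltens)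
next
  assume lin: "kLinear_coproduct sm D"
    and right: "\<forall>a b. teq sm 2 (D (a * b)) (tens_rmult b (D a))"
    and left: "\<forall>a b. teq sm 2 (D (a * b)) (tens_lmult a (D b))"
  have D_carrier: "D a \<in> tens_carrier 2" for a
    using lin by (simp add: kLinear_coproduct_def)
  have "teq sm 2 (lin_ext (\<lambda>w. D (w!0 * w!1)) f) (id_m (lin_ext (\<lambda>w. rtens (D (w!0)) (w!1)) f))"
    if f: "f \<in> tens_carrier 2" for f
  proof -
    have "id_m (lin_ext (\<lambda>w. rtens (D (w!0)) (w!1)) f) = lin_ext (\<lambda>w. id_m (rtens (D (w!0)) (w!1))) f"
      unfolding id_m_def
      by (rule lin_ext_lin_ext)
        (auto simp: supp_rtens tens_carrier_finite[OF f] tens_carrier_finite[OF D_carrier])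
    then show ?thesis
      using right by (auto simp: id_m_rtens D_carrier intro: teq_lin_ext tens_carrier_finite[OF f])
  qed
  moreover have "teq sm 2 (lin_ext (\<lambda>w. D (w!0 * w!1)) f) (m_id (lin_ext (\<lambda>w. ltens (w!0) (D (w!1))) f))"
    if f: "f \<in> tens_carrier 2" for f
  proof -
    have "m_id (lin_ext (\<lambda>w. ltens (w!0) (D (w!1))) f) = lin_ext (\<lambda>w. m_id (ltens (w!0) (D (w!1)))) f"
      unfolding m_id_def
      by (rule lin_ext_lin_ext)
        (auto simp: supp_ltens tens_carrier_finite[OF f] tens_carrier_finite[OF D_carrier])
    then show ?thesis
      using left by (auto simp: m_id_ltens D_carrier intro: teq_lin_ext tens_carrier_finite[OF f])
  qed
  ultimately show "nearly_frobenius sm D"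
    using lin by (simp add: nearly_frobenius_def)
qed

locale k_algebra =
  fixes sm :: "'k::field \<Rightarrow> 'a::ring_1 \<Rightarrow> 'a"
  assumes kalgebra: "kalgebra sm"
begin

sublocale vector_space sm
  using kalgebra by (simp add: kalgebra_def)

lemma smult_mult_left: "sm c (a * b) = sm c a * b"
  using kalgebra by (simp add: kalgebra_def)

lemma smult_mult_right: "sm c (a * b) = a * sm c b"
  using kalgebra unfolding kalgebra_def by metis

lemma smult_eq_mult_left: "sm c a = sm c 1 * a"
  using smult_mult_left[of c 1 a] by simp

lemma smult_eq_mult_right: "sm c a = a * sm c 1"
  using smult_mult_right[of c a 1] by simp

lemma tens_lmult_tens_rel: "f \<in> tens_rel sm 2 \<Longrightarrow> tens_lmult a f \<in> tens_rel sm 2"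
  unfolding tens_lmult_def
proof (rule lin_ext_preserves_tens_rel)
  fix g
  assume "g \<in> tens_gens sm 2"
  then show "lin_ext (\<lambda>w. delta [a * w!0, w!1]) g \<in> tens_rel sm 2"
  proof (cases rule: tens_gens_2E)
    case (1 b x y)
    then show ?thesis
      using tens_rel_add_fst[of "a * x" "a * y" b sm] by (simp add: lin_ext_delta_diff lin_ext_delta_diff_scale distrib_left)
  next
    case (2 b x y)
    then show ?thesis
      using tens_rel_add_snd[of "a * b" x y sm] by (simp add: lin_ext_delta_diff lin_ext_delta_diff_scale)
  next
    case (3 b c x)
    then show ?thesis
      using tens_rel_smult_fst[of sm c "a * x" b] by (simp add: lin_ext_delta_diff lin_ext_delta_diff_scale smult_mult_right)
  next
    case (4 b c x)
    then show ?thesis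
      using tens_rel_smult_snd[of "a * b" sm c x] by (simp add: lin_ext_delta_diff lin_ext_delta_diff_scale)
  qed
qed

lemma tens_rmult_tens_rel: "f \<in> tens_rel sm 2 \<Longrightarrow> tens_rmult a f \<in> tens_rel sm 2"
  unfolding tens_rmult_def
proof (rule lin_ext_preserves_tens_rel)
  fix g
  assume "g \<in> tens_gens sm 2"
  then show "lin_ext (\<lambda>w. delta [w!0, w!1 * a]) g \<in> tens_rel sm 2"
  proof (cases rule: tens_gens_2E)
    case (1 b x y)
    then show ?thesis
      using tens_rel_add_fst[of x y "b * a" sm] by (simp add: lin_ext_delta_diff lin_ext_delta_diff_scale)
  next
    case (2 b x y)
    then show ?thesis
      using tens_rel_add_snd[of b "x * a" "y * a" sm] by (simp add: lin_ext_delta_diff lin_ext_delta_diff_scale distrib_right)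
  next
    case (3 b c x)
    then show ?thesis
      using tens_rel_smult_fst[of sm c x "b * a"] by (simp add: lin_ext_delta_diff lin_ext_delta_diff_scale)
  next
    case (4 b c x)
    then show ?thesis
      using tens_rel_smult_snd[of b sm c "x * a"] by (simp add: lin_ext_delta_diff lin_ext_delta_diff_scale smult_mult_left)
  qed
qed

lemma tens_lmult_teq:
  assumes "f \<in> tens_carrier 2" "g \<in> tens_carrier 2" "teq sm 2 f g"
  shows "teq sm 2 (tens_lmult a f) (tens_lmult a g)"
proof -
  have "(\<lambda>u. tens_lmult a f u - tens_lmult a g u) = tens_lmult a (\<lambda>u. f u - g u)"
    unfolding tens_lmult_def by (rule lin_ext_diff[symmetric]) (use assms tens_carrier_finite in auto)
  then show ?thesis
    using tens_lmult_tens_rel assms(3) unfolding teq_def by metis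
qed

lemma tens_rmult_teq:
  assumes "f \<in> tens_carrier 2" "g \<in> tens_carrier 2" "teq sm 2 f g"
  shows "teq sm 2 (tens_rmult a f) (tens_rmult a g)"
proof -
  have "(\<lambda>u. tens_rmult a f u - tens_rmult a g u) = tens_rmult a (\<lambda>u. f u - g u)"
    unfolding tens_rmult_def by (rule lin_ext_diff[symmetric]) (use assms tens_carrier_finite in auto)
  then show ?thesis
    using tens_rmult_tens_rel assms(3) unfolding teq_def by metis
qed

lemma teq_delta_smult_fst: "teq sm 2 (delta [sm c x, y]) (\<lambda>u. c * delta [x, y] u)"
  unfolding teq_def by (rule tens_rel_smult_fst)

lemma teq_delta_smult_snd: "teq sm 2 (delta [x, sm c y]) (\<lambda>u. c * delta [x, y] u)"
  unfolding teq_def by (rule tens_rel_smult_snd)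

lemma tens_lmult_scalar_scale:
  assumes "f \<in> tens_carrier 2"
  shows "teq sm 2 (tens_lmult (sm c 1) f) (\<lambda>u. c * f u)"
proof -
  have "(\<lambda>u. c * f u) = (\<lambda>u. c * lin_ext delta f u)"
    by (simp add: lin_ext_delta_id tens_carrier_finite[OF assms])
  also have "\<dots> = lin_ext (\<lambda>w u. c * delta [w!0, w!1] u) f"
    unfolding lin_ext_map_scale by (rule lin_ext_cong_2[OF assms]) simp
  finally have scale_f: "(\<lambda>u. c * f u) = lin_ext (\<lambda>w u. c * delta [w!0, w!1] u) f" .
  show ?thesis
    unfolding tens_lmult_def scale_f
    by (rule teq_lin_ext)
      (simp_all add: tens_carrier_finite[OF assms] teq_delta_smult_fst flip: smult_eq_mult_left)
qed

lemma tens_lmult_scalar_eq_rmult: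
  assumes "f \<in> tens_carrier 2"
  shows "teq sm 2 (tens_lmult (sm c 1) f) (tens_rmult (sm c 1) f)"
  unfolding tens_lmult_def tens_rmult_def
proof (rule teq_lin_ext)
  fix w
  show "teq sm 2 (delta [sm c 1 * w!0, w!1]) (delta [w!0, w!1 * sm c 1])"
    unfolding smult_eq_mult_left[symmetric] smult_eq_mult_right[symmetric]
    by (rule teq_trans[OF teq_delta_smult_fst teq_sym[OF teq_delta_smult_snd]])
qed (rule tens_carrier_finite[OF assms])

end

definition add_monoid :: "('a, 'm) bimod \<Rightarrow> 'm monoid" where
  "add_monoid M = \<lparr>carrier = bcarrier M, mult = badd M, one = bzero M\<rparr>"

lemma add_monoid_simps [simp]:
  "carrier (add_monoid M) = bcarrier M" "mult (add_monoid M) = badd M" "one (add_monoid M) = bzero M"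
  by (simp_all add: add_monoid_def)

locale algebra_bimodule = k_algebra sm for sm :: "'k::field \<Rightarrow> 'a::ring_1 \<Rightarrow> 'a" +
  fixes M :: "('a, 'm) bimod"
  assumes bimodule: "bimodule sm M"
begin

lemmas bimodule_unfolded = bimodule[unfolded bimodule_def Let_def]

lemma bzero_closed [simp]: "bzero M \<in> bcarrier M"
  using bimodule_unfolded by metis

lemma badd_closed [simp]: "x \<in> bcarrier M \<Longrightarrow> y \<in> bcarrier M \<Longrightarrow> badd M x y \<in> bcarrier M"
  using bimodule_unfolded by metis

lemma badd_assoc:
  "x \<in> bcarrier M \<Longrightarrow> y \<in> bcarrier M \<Longrightarrow> z \<in> bcarrier M \<Longrightarrow>
    badd M (badd M x y) z = badd M x (badd M y z)"
  using bimodule_unfolded by metis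

lemma badd_commute: "x \<in> bcarrier M \<Longrightarrow> y \<in> bcarrier M \<Longrightarrow> badd M x y = badd M y x"
  using bimodule_unfolded by metis

lemma bzero_badd [simp]: "x \<in> bcarrier M \<Longrightarrow> badd M (bzero M) x = x"
  using bimodule_unfolded by metis

lemma badd_bzero [simp]: "x \<in> bcarrier M \<Longrightarrow> badd M x (bzero M) = x"
  using badd_commute[of x "bzero M"] by simp

lemma badd_inverse: "x \<in> bcarrier M \<Longrightarrow> \<exists>y\<in>bcarrier M. badd M x y = bzero M"
  using bimodule_unfolded by metis

lemma blact_closed [simp]: "x \<in> bcarrier M \<Longrightarrow> blact M a x \<in> bcarrier M"
  using bimodule_unfolded by metis

lemma bract_closed [simp]: "x \<in> bcarrier M \<Longrightarrow> bract M x a \<in> bcarrier M"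
  using bimodule_unfolded by metis

lemma blact_badd:
  "x \<in> bcarrier M \<Longrightarrow> y \<in> bcarrier M \<Longrightarrow> blact M a (badd M x y) = badd M (blact M a x) (blact M a y)"
  using bimodule_unfolded by metis

lemma bract_badd:
  "x \<in> bcarrier M \<Longrightarrow> y \<in> bcarrier M \<Longrightarrow> bract M (badd M x y) a = badd M (bract M x a) (bract M y a)"
  using bimodule_unfolded by metis

lemma blact_add: "x \<in> bcarrier M \<Longrightarrow> blact M (a + b) x = badd M (blact M a x) (blact M b x)"
  using bimodule_unfolded by metis

lemma bract_add: "x \<in> bcarrier M \<Longrightarrow> bract M x (a + b) = badd M (bract M x a) (bract M x b)"
  using bimodule_unfolded by metis

lemma blact_blact: "x \<in> bcarrier M \<Longrightarrow> blact M a (blact M b x) = blact M (a * b) x"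
  using bimodule_unfolded by metis

lemma bract_bract: "x \<in> bcarrier M \<Longrightarrow> bract M (bract M x a) b = bract M x (a * b)"
  using bimodule_unfolded by metis

lemma bract_blact: "x \<in> bcarrier M \<Longrightarrow> bract M (blact M a x) b = blact M a (bract M x b)"
  using bimodule_unfolded by metis

lemma blact_scalar: "x \<in> bcarrier M \<Longrightarrow> blact M (sm c 1) x = bract M x (sm c 1)"
  using bimodule_unfolded by metis

lemma badd_left_cancel_bzero:
  assumes "x \<in> bcarrier M" "y \<in> bcarrier M" "badd M x y = y"
  shows "x = bzero M"
proof -
  obtain y' where y': "y' \<in> bcarrier M" "badd M y y' = bzero M"
    using badd_inverse[OF assms(2)] by blast
  have "badd M x (bzero M) = bzero M"
    using badd_assoc[OF assms(1,2) y'(1)] assms(3) y'(2) by simp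
  then show ?thesis
    using assms(1) by simp
qed

lemma blact_bzero [simp]: "blact M a (bzero M) = bzero M"
  using blact_badd[of "bzero M" "bzero M" a, symmetric]
  by (intro badd_left_cancel_bzero[of _ "blact M a (bzero M)"]) simp_all

lemma bract_bzero [simp]: "bract M (bzero M) a = bzero M"
  using bract_badd[of "bzero M" "bzero M" a, symmetric]
  by (intro badd_left_cancel_bzero[of _ "bract M (bzero M) a"]) simp_all

lemma blact_zero [simp]: "x \<in> bcarrier M \<Longrightarrow> blact M 0 x = bzero M"
  using blact_add[of x 0 0, symmetric]
  by (intro badd_left_cancel_bzero[of _ "blact M 0 x"]) simp_all

lemma comm_monoid_add_monoid: "comm_monoid (add_monoid M)"
  by (rule comm_monoidI) (auto simp: badd_assoc intro: badd_commute)

abbreviation bsum :: "('b \<Rightarrow> 'm) \<Rightarrow> 'b set \<Rightarrow> 'm" where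
  "bsum F A \<equiv> finprod (add_monoid M) F A"

lemma bsum_infinite: "infinite A \<Longrightarrow> bsum F A = bzero M"
  using comm_monoid.finprod_infinite[OF comm_monoid_add_monoid] by simp

lemma bsum_empty [simp]: "bsum F {} = bzero M"
  using comm_monoid.finprod_empty[OF comm_monoid_add_monoid] by simp

lemma bsum_insert:
  "finite A \<Longrightarrow> a \<notin> A \<Longrightarrow> F \<in> insert a A \<rightarrow> bcarrier M \<Longrightarrow> bsum F (insert a A) = badd M (F a) (bsum F A)"
  using comm_monoid.finprod_insert[OF comm_monoid_add_monoid, of A a F] by auto

lemma bsum_closed [simp]: "F \<in> A \<rightarrow> bcarrier M \<Longrightarrow> bsum F A \<in> bcarrier M"
  using comm_monoid.finprod_closed[OF comm_monoid_add_monoid, of F A] by simp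

lemma bsum_badd:
  "F \<in> A \<rightarrow> bcarrier M \<Longrightarrow> H \<in> A \<rightarrow> bcarrier M \<Longrightarrow>
    bsum (\<lambda>w. badd M (F w) (H w)) A = badd M (bsum F A) (bsum H A)"
  using comm_monoid.finprod_multf[OF comm_monoid_add_monoid, of F A H] by simp

lemma bsum_mono_neutral:
  "finite B \<Longrightarrow> A \<subseteq> B \<Longrightarrow> (\<And>w. w \<in> B - A \<Longrightarrow> F w = bzero M) \<Longrightarrow> F \<in> B \<rightarrow> bcarrier M \<Longrightarrow>
    bsum F A = bsum F B"
  using comm_monoid.finprod_mono_neutral_cong_left[OF comm_monoid_add_monoid, of B A F F] by simp

lemma bsum_singleton: "F a \<in> bcarrier M \<Longrightarrow> bsum F {a} = F a"
  using bsum_insert[of "{}" a F] by simp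

lemma blact_bsum: "F \<in> A \<rightarrow> bcarrier M \<Longrightarrow> blact M a (bsum F A) = bsum (\<lambda>w. blact M a (F w)) A"
proof (induction A rule: infinite_finite_induct)
  case (infinite A)
  then show ?case
    by (simp add: bsum_infinite)
next
  case (insert b A)
  then show ?case
    by (simp add: bsum_insert blact_badd Pi_iff)
qed simp

lemma bract_bsum: "F \<in> A \<rightarrow> bcarrier M \<Longrightarrow> bract M (bsum F A) a = bsum (\<lambda>w. bract M (F w) a) A"
proof (induction A rule: infinite_finite_induct)
  case (infinite A)
  then show ?case
    by (simp add: bsum_infinite)
next
  case (insert b A)
  then show ?case
    by (simp add: bsum_insert bract_badd Pi_iff)
qed simp

lemma bimod_hom_bzero:
  assumes "algebra_bimodule sm N" "bimod_hom M N g"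
  shows "g (bzero M) = bzero N"
proof -
  have closed: "g (bzero M) \<in> bcarrier N"
    using assms(2) by (simp add: bimod_hom_def)
  have "badd N (g (bzero M)) (g (bzero M)) = g (bzero M)"
    using assms(2) unfolding bimod_hom_def by (metis bzero_badd bzero_closed)
  then show ?thesis
    by (rule algebra_bimodule.badd_left_cancel_bzero[OF assms(1) closed closed])
qed

lemma bimod_hom_bsum:
  assumes "algebra_bimodule sm N" "bimod_hom M N g" "F \<in> A \<rightarrow> bcarrier M"
  shows "g (bsum F A) = finprod (add_monoid N) (\<lambda>w. g (F w)) A"
  using assms(3)
proof (induction A rule: infinite_finite_induct)
  case (infinite A)
  then show ?case
    using bimod_hom_bzero[OF assms(1,2)]
    by (simp add: bsum_infinite algebra_bimodule.bsum_infinite[OF assms(1)])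
next
  case empty
  then show ?case
    using bimod_hom_bzero[OF assms(1,2)] by (simp add: algebra_bimodule.bsum_empty[OF assms(1)])
next
  case (insert b A)
  then have "(\<lambda>w. g (F w)) \<in> insert b A \<rightarrow> bcarrier N"
    using assms(2) unfolding bimod_hom_def by auto
  with insert assms(2) show ?case
    using algebra_bimodule.bsum_insert[OF assms(1), of A b "\<lambda>w. g (F w)"]
    unfolding bimod_hom_def by (simp add: bsum_insert)
qed

end

lemma regular_bimod_simps [simp]:
  "bcarrier regular_bimod = UNIV" "badd regular_bimod = (+)" "bzero regular_bimod = 0"
  "blact regular_bimod = (*)" "bract regular_bimod = (*)"
  by (simp_all add: regular_bimod_def)

lemma bimod_hom_regular_iff:
  "bimod_hom regular_bimod M h \<longleftrightarrow> (\<forall>a. h a \<in> bcarrier M) \<and> (\<forall>a b. h (a + b) = badd M (h a) (h b)) \<and>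
     (\<forall>a b. h (a * b) = blact M a (h b)) \<and> (\<forall>a b. h (a * b) = bract M (h a) b)"
  by (auto simp: bimod_hom_def)

lemma (in k_algebra) bimodule_regular_bimod: "bimodule sm regular_bimod"
proof -
  have "sm c 1 * x = x * sm c 1" for c and x :: 'a
    using smult_eq_mult_left smult_eq_mult_right by metis
  then show ?thesis
    unfolding bimodule_def Let_def by (auto simp: algebra_simps intro: exI[of _ "- _"])
qed

text \<open>On representatives, \<open>sandwich sm M x\<close> is the linear map \<open>A \<otimes> A \<rightarrow> M\<close>,
  \<open>a \<otimes> b \<mapsto> a x b\<close>.\<close>

definition sandwich_term :: "('k::field \<Rightarrow> 'a::ring_1 \<Rightarrow> 'a) \<Rightarrow> ('a, 'm) bimod \<Rightarrow> 'm \<Rightarrow> 'k \<Rightarrow> 'a list \<Rightarrow> 'm" where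
  "sandwich_term sm M x c w = blact M (sm c (w!0)) (bract M x (w!1))"

definition sandwich :: "('k::field \<Rightarrow> 'a::ring_1 \<Rightarrow> 'a) \<Rightarrow> ('a, 'm) bimod \<Rightarrow> 'm \<Rightarrow> ('a list \<Rightarrow> 'k) \<Rightarrow> 'm" where
  "sandwich sm M x f = finprod (add_monoid M) (\<lambda>w. sandwich_term sm M x (f w) w) (supp f)"

locale pointed_bimodule = algebra_bimodule +
  fixes x
  assumes x_closed: "x \<in> bcarrier M"
begin

lemma sandwich_term_closed [simp]: "sandwich_term sm M x c w \<in> bcarrier M"
  by (simp add: sandwich_term_def x_closed)

lemma sandwich_term_zero [simp]: "sandwich_term sm M x 0 w = bzero M"
  by (simp add: sandwich_term_def x_closed)

lemma sandwich_term_add: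
  "sandwich_term sm M x (c + d) w = badd M (sandwich_term sm M x c w) (sandwich_term sm M x d w)"
  by (simp add: sandwich_term_def x_closed scale_left_distrib blact_add)

lemma sandwich_term_mult: "sandwich_term sm M x (c * d) w = blact M (sm c 1) (sandwich_term sm M x d w)"
  by (simp add: sandwich_term_def x_closed blact_blact flip: scale_scale smult_eq_mult_left)

lemma sandwich_superset:
  assumes "finite S" "supp f \<subseteq> S"
  shows "sandwich sm M x f = bsum (\<lambda>w. sandwich_term sm M x (f w) w) S"
  unfolding sandwich_def by (rule bsum_mono_neutral) (use assms in auto)

lemma sandwich_closed [simp]: "sandwich sm M x f \<in> bcarrier M"
  unfolding sandwich_def by simp

lemma sandwich_add:
  assumes "finite (supp f)" "finite (supp g)"
  shows "sandwich sm M x (\<lambda>u. f u + g u) = badd M (sandwich sm M x f) (sandwich sm M x g)"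
proof -
  let ?S = "supp f \<union> supp g"
  have "sandwich sm M x (\<lambda>u. f u + g u) = bsum (\<lambda>w. sandwich_term sm M x (f w + g w) w) ?S"
    by (rule sandwich_superset) (use assms in auto)
  also have "\<dots> = badd M (bsum (\<lambda>w. sandwich_term sm M x (f w) w) ?S) (bsum (\<lambda>w. sandwich_term sm M x (g w) w) ?S)"
    by (simp add: sandwich_term_add bsum_badd)
  also have "\<dots> = badd M (sandwich sm M x f) (sandwich sm M x g)"
    using sandwich_superset[of ?S f] sandwich_superset[of ?S g] assms by auto
  finally show ?thesis .
qed

lemma sandwich_scale:
  assumes "finite (supp f)"
  shows "sandwich sm M x (\<lambda>u. c * f u) = blact M (sm c 1) (sandwich sm M x f)"
proof -
  have "sandwich sm M x (\<lambda>u. c * f u) = bsum (\<lambda>w. sandwich_term sm M x (c * f w) w) (supp f)"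
    by (rule sandwich_superset) (use assms in auto)
  also have "\<dots> = blact M (sm c 1) (sandwich sm M x f)"
    unfolding sandwich_def by (simp add: sandwich_term_mult blact_bsum)
  finally show ?thesis .
qed

lemma sandwich_sum_delta:
  assumes "finite S"
  shows "sandwich sm M x (\<lambda>u. \<Sum>r\<in>S. c r * delta (F r) u) = bsum (\<lambda>r. sandwich_term sm M x (c r) (F r)) S"
  using assms
proof (induction S rule: finite_induct)
  case empty
  then show ?case
    by (simp add: sandwich_def)
next
  case (insert a S)
  have fin: "finite (supp (\<lambda>u. \<Sum>r\<in>S. c r * delta (F r) u))"
    by (rule finite_supp_sum) (use insert in auto)
  have single: "sandwich sm M x (\<lambda>u. c a * delta (F a) u) = sandwich_term sm M x (c a) (F a)"
    by (subst sandwich_superset[of "{F a}"]) (auto simp: delta_def bsum_singleton)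
  show ?case
    using insert sandwich_add[OF finite_supp_scale[of "delta (F a)" "c a"] fin]
    by (simp add: single bsum_insert)
qed

lemma sandwich_delta: "sandwich sm M x (delta [a, b]) = blact M a (bract M x b)"
  using sandwich_sum_delta[of "{()}" "\<lambda>_. 1" "\<lambda>_. [a, b]"]
  by (simp add: sandwich_term_def x_closed bsum_singleton)

lemma sandwich_scale_delta: "sandwich sm M x (\<lambda>u. c * delta [a, b] u) = blact M (sm c a) (bract M x b)"
  using sandwich_sum_delta[of "{()}" "\<lambda>_. c" "\<lambda>_. [a, b]"]
  by (simp add: sandwich_term_def x_closed bsum_singleton)

end

context pointed_bimodule
begin

lemma sandwich_diff_eq_bzero:
  assumes "finite (supp f)" "finite (supp g)" "sandwich sm M x f = sandwich sm M x g"
  shows "sandwich sm M x (\<lambda>u. f u - g u) = bzero M"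
proof (rule badd_left_cancel_bzero)
  have "sandwich sm M x f = sandwich sm M x (\<lambda>u. (f u - g u) + g u)"
    by simp
  also have "\<dots> = badd M (sandwich sm M x (\<lambda>u. f u - g u)) (sandwich sm M x g)"
    by (rule sandwich_add) (use assms finite_supp_diff in auto)
  finally show "badd M (sandwich sm M x (\<lambda>u. f u - g u)) (sandwich sm M x g) = sandwich sm M x g"
    using assms(3) by simp
qed simp_all

lemma sandwich_tens_gens:
  assumes "g \<in> tens_gens sm 2"
  shows "sandwich sm M x g = bzero M"
  using assms
proof (cases rule: tens_gens_2E)
  case (1 a p q)
  have "sandwich sm M x (delta [p + q, a]) = sandwich sm M x (\<lambda>u. delta [p, a] u + delta [q, a] u)"
    by (simp add: sandwich_add sandwich_delta x_closed blact_add)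
  then show ?thesis
    unfolding 1 diff_diff_eq by (intro sandwich_diff_eq_bzero finite_supp_add) simp_all
next
  case (2 a p q)
  have "sandwich sm M x (delta [a, p + q]) = sandwich sm M x (\<lambda>u. delta [a, p] u + delta [a, q] u)"
    by (simp add: sandwich_add sandwich_delta x_closed bract_add blact_badd)
  then show ?thesis
    unfolding 2 diff_diff_eq by (intro sandwich_diff_eq_bzero finite_supp_add) simp_all
next
  case (3 a c p)
  have "sandwich sm M x (delta [sm c p, a]) = sandwich sm M x (\<lambda>u. c * delta [p, a] u)"
    by (simp add: sandwich_delta sandwich_scale_delta)
  then show ?thesis
    unfolding 3 by (intro sandwich_diff_eq_bzero finite_supp_scale) simp_all
next
  case (4 a c p)
  \<comment> \<open>the scalar passes through \<open>x\<close> because the two induced \<open>k\<close>-actions on \<open>M\<close> agree\<close>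
  have "bract M x (sm c p) = blact M (sm c 1) (bract M x p)"
    by (metis x_closed bract_bract bract_blact blact_scalar smult_eq_mult_left)
  then have "sandwich sm M x (delta [a, sm c p]) = sandwich sm M x (\<lambda>u. c * delta [a, p] u)"
    by (simp add: sandwich_delta sandwich_scale_delta x_closed blact_blact flip: smult_eq_mult_right)
  then show ?thesis
    unfolding 4 by (intro sandwich_diff_eq_bzero finite_supp_scale) simp_all
qed

lemma sandwich_tens_rel: "f \<in> tens_rel sm 2 \<Longrightarrow> sandwich sm M x f = bzero M"
proof (induction rule: tens_rel.induct)
  case zero
  then show ?case
    by (simp add: sandwich_def)
next
  case (gen g)
  then show ?case
    by (rule sandwich_tens_gens)
next
  case (add f g)
  then show ?case
    by (simp add: sandwich_add tens_rel_finite)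
next
  case (scale f c)
  then show ?case
    by (simp add: sandwich_scale tens_rel_finite)
qed

lemma sandwich_teq:
  assumes "g \<in> tens_carrier 2" "teq sm 2 f g"
  shows "sandwich sm M x f = sandwich sm M x g"
proof -
  have rel: "(\<lambda>u. f u - g u) \<in> tens_rel sm 2"
    using assms(2) by (simp add: teq_def)
  have "sandwich sm M x f = sandwich sm M x (\<lambda>u. g u + (f u - g u))"
    by simp
  also have "\<dots> = badd M (sandwich sm M x g) (sandwich sm M x (\<lambda>u. f u - g u))"
    by (rule sandwich_add[OF tens_carrier_finite[OF assms(1)] tens_rel_finite[OF rel]])
  finally show ?thesis
    by (simp add: sandwich_tens_rel[OF rel])
qed

lemma sandwich_tens_lmult:
  assumes "finite (supp f)"
  shows "sandwich sm M x (tens_lmult a f) = blact M a (sandwich sm M x f)"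
proof -
  have "sandwich sm M x (tens_lmult a f) = bsum (\<lambda>r. sandwich_term sm M x (f r) [a * r!0, r!1]) (supp f)"
    unfolding tens_lmult_def lin_ext_def by (rule sandwich_sum_delta[OF assms])
  also have "\<dots> = bsum (\<lambda>r. blact M a (sandwich_term sm M x (f r) r)) (supp f)"
    by (simp add: sandwich_term_def x_closed blact_blact smult_mult_right)
  also have "\<dots> = blact M a (sandwich sm M x f)"
    unfolding sandwich_def by (simp add: blact_bsum)
  finally show ?thesis .
qed

lemma sandwich_tens_rmult:
  assumes "finite (supp f)"
  shows "sandwich sm M x (tens_rmult b f) = bract M (sandwich sm M x f) b"
proof -
  have "sandwich sm M x (tens_rmult b f) = bsum (\<lambda>r. sandwich_term sm M x (f r) [r!0, r!1 * b]) (supp f)"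
    unfolding tens_rmult_def lin_ext_def by (rule sandwich_sum_delta[OF assms])
  also have "\<dots> = bsum (\<lambda>r. bract M (sandwich_term sm M x (f r) r) b) (supp f)"
    by (simp add: sandwich_term_def x_closed bract_blact flip: bract_bract)
  also have "\<dots> = bract M (sandwich sm M x f) b"
    unfolding sandwich_def by (simp add: bract_bsum)
  finally show ?thesis .
qed

lemma bimod_hom_sandwich:
  assumes "algebra_bimodule sm N" "bimod_hom M N g"
  shows "g (sandwich sm M x f) = sandwich sm N (g x) f"
proof -
  have "g (sandwich_term sm M x c w) = sandwich_term sm N (g x) c w" for c w
    using assms(2) x_closed by (simp add: bimod_hom_def sandwich_term_def)
  then show ?thesis
    unfolding sandwich_def by (simp add: bimod_hom_bsum[OF assms])
qed

lemma bimod_hom_sandwich_coproduct: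
  assumes "nearly_frobenius sm D"
  shows "bimod_hom regular_bimod M (\<lambda>a. sandwich sm M x (D a))"
proof -
  have D: "kLinear_coproduct sm D" "\<And>a b. teq sm 2 (D (a * b)) (tens_rmult b (D a))"
    "\<And>a b. teq sm 2 (D (a * b)) (tens_lmult a (D b))"
    using assms by (simp_all add: nearly_frobenius_iff)
  then have D_carrier: "D a \<in> tens_carrier 2" for a
    by (simp add: kLinear_coproduct_def)
  have "sandwich sm M x (D (a + b)) = badd M (sandwich sm M x (D a)) (sandwich sm M x (D b))" for a b
    using D(1) sandwich_teq[OF tens_carrier_add[OF D_carrier D_carrier]]
    by (simp add: kLinear_coproduct_def sandwich_add tens_carrier_finite[OF D_carrier])
  moreover have "sandwich sm M x (D (a * b)) = blact M a (sandwich sm M x (D b))" for a b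
    using sandwich_teq[OF tens_lmult_carrier[OF D_carrier] D(3)]
    by (simp add: sandwich_tens_lmult tens_carrier_finite[OF D_carrier])
  moreover have "sandwich sm M x (D (a * b)) = bract M (sandwich sm M x (D a)) b" for a b
    using sandwich_teq[OF tens_rmult_carrier[OF D_carrier] D(2)]
    by (simp add: sandwich_tens_rmult tens_carrier_finite[OF D_carrier])
  ultimately show ?thesis
    by (simp add: bimod_hom_regular_iff)
qed

end

section \<open>Nearly Frobenius coproducts give projectivity\<close>

context k_algebra
begin

lemma pointed_bimodule_regular: "pointed_bimodule sm regular_bimod 1"
  by unfold_locales (simp_all add: bimodule_regular_bimod)

lemma bsum_regular_bimod:
  assumes "finite A"
  shows "finprod (add_monoid (regular_bimod :: ('a, 'a) bimod)) F A = sum F A"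
proof -
  interpret A: pointed_bimodule sm regular_bimod 1
    by (rule pointed_bimodule_regular)
  from assms show ?thesis
    by (induction A rule: finite_induct) (simp_all add: A.bsum_insert)
qed

lemma mult_tens_eq_sandwich:
  assumes "f \<in> tens_carrier n"
  shows "mult_tens sm f = sandwich sm regular_bimod 1 f"
  using tens_carrier_finite[OF assms]
  by (simp add: mult_tens_def sandwich_def sandwich_term_def bsum_regular_bimod smult_mult_left)

lemma projective_regular_if_normalized_nearly_frobenius:
  assumes "normalized_nearly_frobenius sm D"
  shows "projective_regular sm TYPE('m) TYPE('n)"
  unfolding projective_regular_def
proof (intro allI impI, elim conjE)
  fix M :: "('a, 'm) bimod" and N :: "('a, 'n) bimod" and g f
  assume M: "bimodule sm M" and N: "bimodule sm N" and g: "bimod_hom M N g"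
    and g_onto: "g ` bcarrier M = bcarrier N" and f: "bimod_hom regular_bimod N f"
  have "f 1 \<in> g ` bcarrier M"
    using f g_onto by (simp add: bimod_hom_regular_iff)
  then obtain x where x: "x \<in> bcarrier M" "g x = f 1"
    by (metis imageE)
  interpret M: pointed_bimodule sm M x
    by unfold_locales (rule M, rule x(1))
  interpret A: pointed_bimodule sm regular_bimod 1
    by (rule pointed_bimodule_regular)
  have N': "algebra_bimodule sm N"
    by unfold_locales (rule N)
  have D: "nearly_frobenius sm D" "\<And>a. mult_tens sm (D a) = a"
    using assms by (simp_all add: normalized_nearly_frobenius_def)
  have D_carrier: "D a \<in> tens_carrier 2" for a
    using D(1) by (simp add: nearly_frobenius_def kLinear_coproduct_def)
  have "g (sandwich sm M x (D a)) = f a" for a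
  proof -
    have "g (sandwich sm M x (D a)) = sandwich sm N (f 1) (D a)"
      using M.bimod_hom_sandwich[OF N' g] x(2) by simp
    also have "\<dots> = f (sandwich sm regular_bimod 1 (D a))"
      using A.bimod_hom_sandwich[OF N' f] by simp
    also have "\<dots> = f a"
      using D(2)[of a] by (simp add: mult_tens_eq_sandwich[OF D_carrier])
    finally show ?thesis .
  qed
  with M.bimod_hom_sandwich_coproduct[OF D(1)]
  show "\<exists>h. bimod_hom regular_bimod M h \<and> (\<forall>a. g (h a) = f a)"
    by blast
qed

end

section \<open>Projectivity gives a nearly Frobenius coproduct\<close>

definition tens_class :: "('k::field \<Rightarrow> 'a::ring_1 \<Rightarrow> 'a) \<Rightarrow> ('a list \<Rightarrow> 'k) \<Rightarrow> ('a list \<Rightarrow> 'k) set" where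
  "tens_class sm f = {g \<in> tens_carrier 2. teq sm 2 g f}"

definition class_rep :: "'b set \<Rightarrow> 'b" where
  "class_rep X = (SOME f. f \<in> X)"

definition tens_square_bimod :: "('k::field \<Rightarrow> 'a::ring_1 \<Rightarrow> 'a) \<Rightarrow> ('a, ('a list \<Rightarrow> 'k) set) bimod" where
  "tens_square_bimod sm =
     \<lparr>bcarrier = tens_class sm ` tens_carrier 2,
      badd = (\<lambda>X Y. tens_class sm (\<lambda>u. class_rep X u + class_rep Y u)),
      bzero = tens_class sm (\<lambda>u. 0),
      blact = (\<lambda>a X. tens_class sm (tens_lmult a (class_rep X))),
      bract = (\<lambda>X b. tens_class sm (tens_rmult b (class_rep X)))\<rparr>"

lemma tens_class_eq_iff:
  assumes "f \<in> tens_carrier 2" "g \<in> tens_carrier 2"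
  shows "tens_class sm f = tens_class sm g \<longleftrightarrow> teq sm 2 f g"
proof
  assume "tens_class sm f = tens_class sm g"
  moreover have "f \<in> tens_class sm f"
    using assms(1) teq_refl by (simp add: tens_class_def)
  ultimately show "teq sm 2 f g"
    by (simp add: tens_class_def)
next
  assume "teq sm 2 f g"
  then show "tens_class sm f = tens_class sm g"
    unfolding tens_class_def using teq_trans teq_sym by blast
qed

lemma class_rep_tens_class:
  assumes "f \<in> tens_carrier 2"
  shows "class_rep (tens_class sm f) \<in> tens_carrier 2" "teq sm 2 (class_rep (tens_class sm f)) f"
proof -
  have "f \<in> tens_class sm f"
    using assms teq_refl by (simp add: tens_class_def)
  then have "class_rep (tens_class sm f) \<in> tens_class sm f"
    unfolding class_rep_def by (rule someI[of "\<lambda>g. g \<in> tens_class sm f"])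
  then show "class_rep (tens_class sm f) \<in> tens_carrier 2" "teq sm 2 (class_rep (tens_class sm f)) f"
    by (simp_all add: tens_class_def)
qed

lemma tens_square_bimod_simps:
  "bcarrier (tens_square_bimod sm) = tens_class sm ` tens_carrier 2"
  "bzero (tens_square_bimod sm) = tens_class sm (\<lambda>u. 0)"
  by (simp_all add: tens_square_bimod_def)

context k_algebra
begin

lemma tens_square_badd:
  assumes "f \<in> tens_carrier 2" "g \<in> tens_carrier 2"
  shows "badd (tens_square_bimod sm) (tens_class sm f) (tens_class sm g) = tens_class sm (\<lambda>u. f u + g u)"
  using class_rep_tens_class[OF assms(1)] class_rep_tens_class[OF assms(2)] assms
  by (simp add: tens_square_bimod_def tens_class_eq_iff tens_carrier_add teq_add)

lemma tens_square_blact: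
  assumes "f \<in> tens_carrier 2"
  shows "blact (tens_square_bimod sm) a (tens_class sm f) = tens_class sm (tens_lmult a f)"
  using class_rep_tens_class[OF assms] assms
  by (simp add: tens_square_bimod_def tens_class_eq_iff tens_lmult_carrier tens_lmult_teq)

lemma tens_square_bract:
  assumes "f \<in> tens_carrier 2"
  shows "bract (tens_square_bimod sm) (tens_class sm f) b = tens_class sm (tens_rmult b f)"
  using class_rep_tens_class[OF assms] assms
  by (simp add: tens_square_bimod_def tens_class_eq_iff tens_rmult_carrier tens_rmult_teq)

lemmas tens_square_ops =
  tens_square_bimod_simps tens_square_badd tens_square_blact tens_square_bract
  tens_carrier_add tens_carrier_zero tens_lmult_carrier tens_rmult_carrier

lemma bimodule_tens_square_bimod: "bimodule sm (tens_square_bimod sm)"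
  unfolding bimodule_def Let_def
proof (intro conjI)
  let ?Q = "tens_square_bimod sm"
  show "\<forall>X\<in>bcarrier ?Q. \<exists>Y\<in>bcarrier ?Q. badd ?Q X Y = bzero ?Q"
  proof
    fix X
    assume "X \<in> bcarrier ?Q"
    then obtain f where f: "f \<in> tens_carrier 2" "X = tens_class sm f"
      by (auto simp: tens_square_ops)
    show "\<exists>Y\<in>bcarrier ?Q. badd ?Q X Y = bzero ?Q"
      by (rule bexI[of _ "tens_class sm (\<lambda>u. -1 * f u)"])
        (use f tens_carrier_scale[OF f(1), of "-1"] in \<open>auto simp: tens_square_ops\<close>)
  qed
  show "\<forall>X\<in>bcarrier ?Q. \<forall>Y\<in>bcarrier ?Q. \<forall>Z\<in>bcarrier ?Q. badd ?Q (badd ?Q X Y) Z = badd ?Q X (badd ?Q Y Z)"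
    by (auto simp: tens_square_ops add.assoc)
  show "\<forall>X\<in>bcarrier ?Q. \<forall>Y\<in>bcarrier ?Q. badd ?Q X Y = badd ?Q Y X"
    by (auto simp: tens_square_ops add.commute)
  show "\<forall>a b. \<forall>X\<in>bcarrier ?Q.
          blact ?Q (a + b) X = badd ?Q (blact ?Q a X) (blact ?Q b X) \<and>
          bract ?Q X (a + b) = badd ?Q (bract ?Q X a) (bract ?Q X b)"
    by (auto simp: tens_square_ops tens_class_eq_iff tens_lmult_plus tens_rmult_plus)
  show "\<forall>c. \<forall>X\<in>bcarrier ?Q. blact ?Q (sm c 1) X = bract ?Q X (sm c 1)"
    by (auto simp: tens_square_ops tens_class_eq_iff tens_lmult_scalar_eq_rmult)
qed (auto simp: tens_square_ops tens_lmult_add tens_rmult_add tens_lmult_lmult tens_rmult_rmult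
  tens_rmult_lmult tens_lmult_one tens_rmult_one)

lemma mult_tens_class_rep:
  assumes "f \<in> tens_carrier 2"
  shows "mult_tens sm (class_rep (tens_class sm f)) = mult_tens sm f"
proof -
  interpret A: pointed_bimodule sm regular_bimod 1
    by (rule pointed_bimodule_regular)
  have "mult_tens sm (class_rep (tens_class sm f)) = sandwich sm regular_bimod 1 (class_rep (tens_class sm f))"
    by (rule mult_tens_eq_sandwich[OF class_rep_tens_class(1)[OF assms]])
  also have "\<dots> = sandwich sm regular_bimod 1 f"
    by (rule A.sandwich_teq[OF assms class_rep_tens_class(2)[OF assms]])
  finally show ?thesis
    by (simp add: mult_tens_eq_sandwich[OF assms])
qed

lemma bimod_hom_mult_tens_square:
  "bimod_hom (tens_square_bimod sm) regular_bimod (\<lambda>X. mult_tens sm (class_rep X))"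
proof -
  interpret A: pointed_bimodule sm regular_bimod 1
    by (rule pointed_bimodule_regular)
  have "mult_tens sm (\<lambda>u. f u + g u) = mult_tens sm f + mult_tens sm g"
    and "mult_tens sm (tens_lmult a f) = a * mult_tens sm f"
    and "mult_tens sm (tens_rmult a f) = mult_tens sm f * a"
    if "f \<in> tens_carrier 2" "g \<in> tens_carrier 2" for f g a
    using that
    by (simp_all add: mult_tens_eq_sandwich[where n = 2] tens_carrier_finite tens_carrier_add tens_lmult_carrier
        tens_rmult_carrier A.sandwich_add A.sandwich_tens_lmult A.sandwich_tens_rmult)
  then show ?thesis
    unfolding bimod_hom_def
    by (auto simp: tens_square_ops mult_tens_class_rep)
qed

lemma mult_tens_square_onto:
  "(\<lambda>X. mult_tens sm (class_rep X)) ` bcarrier (tens_square_bimod sm) = bcarrier regular_bimod"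
proof -
  interpret A: pointed_bimodule sm regular_bimod 1
    by (rule pointed_bimodule_regular)
  have "a \<in> (\<lambda>X. mult_tens sm (class_rep X)) ` bcarrier (tens_square_bimod sm)" for a
  proof
    show "tens_class sm (delta [a, 1]) \<in> bcarrier (tens_square_bimod sm)"
      by (simp add: tens_square_bimod_simps tens_carrier_delta_2)
    have "mult_tens sm (delta [a, 1]) = a"
      using A.sandwich_delta[of a 1] by (simp add: mult_tens_eq_sandwich[OF tens_carrier_delta_2])
    then show "a = mult_tens sm (class_rep (tens_class sm (delta [a, 1])))"
      by (simp add: mult_tens_class_rep tens_carrier_delta_2)
  qed
  then show ?thesis
    by auto
qed

lemma normalized_nearly_frobenius_of_section:
  assumes h: "bimod_hom regular_bimod (tens_square_bimod sm) h"
    and splits: "\<And>a. mult_tens sm (class_rep (h a)) = a"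
  shows "normalized_nearly_frobenius sm (\<lambda>a. class_rep (h a))"
proof -
  define D where "D a = class_rep (h a)" for a
  have D_carrier: "D a \<in> tens_carrier 2" and h_class: "h a = tens_class sm (D a)" for a
  proof -
    have "h a \<in> tens_class sm ` tens_carrier 2"
      using h by (simp add: bimod_hom_regular_iff tens_square_bimod_simps)
    then obtain f where f: "f \<in> tens_carrier 2" "h a = tens_class sm f"
      by (metis imageE)
    then show "D a \<in> tens_carrier 2" "h a = tens_class sm (D a)"
      using class_rep_tens_class[OF f(1)] by (simp_all add: D_def tens_class_eq_iff teq_sym)
  qed
  have h_ops: "h (a + b) = badd (tens_square_bimod sm) (h a) (h b)"
    "h (a * b) = blact (tens_square_bimod sm) a (h b)"
    "h (a * b) = bract (tens_square_bimod sm) (h a) b" for a b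
    using h unfolding bimod_hom_regular_iff by blast+
  have add: "teq sm 2 (D (a + b)) (\<lambda>u. D a u + D b u)" for a b
    using h_ops(1)[of a b] D_carrier
    by (simp add: h_class tens_square_badd tens_class_eq_iff tens_carrier_add)
  have left: "teq sm 2 (D (a * b)) (tens_lmult a (D b))" for a b
    using h_ops(2)[of a b] D_carrier
    by (simp add: h_class tens_square_blact tens_class_eq_iff tens_lmult_carrier)
  have right: "teq sm 2 (D (a * b)) (tens_rmult b (D a))" for a b
    using h_ops(3)[of a b] D_carrier
    by (simp add: h_class tens_square_bract tens_class_eq_iff tens_rmult_carrier)
  have scale: "teq sm 2 (D (sm c a)) (\<lambda>u. c * D a u)" for c a
    using left[of "sm c 1" a] tens_lmult_scalar_scale[OF D_carrier]
    by (auto simp flip: smult_eq_mult_left intro: teq_trans)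
  have "nearly_frobenius sm D"
    by (simp add: nearly_frobenius_iff kLinear_coproduct_def D_carrier add scale left right)
  moreover have "D = (\<lambda>a. class_rep (h a))"
    by (simp add: fun_eq_iff D_def)
  ultimately show ?thesis
    using splits by (simp add: normalized_nearly_frobenius_def)
qed

lemma normalized_nearly_frobenius_if_projective:
  assumes "projective_regular sm TYPE(('a list \<Rightarrow> 'k) set) TYPE('a)"
  shows "\<exists>D. normalized_nearly_frobenius sm D"
proof -
  have id_hom: "bimod_hom regular_bimod regular_bimod (\<lambda>a. a)"
    by (simp add: bimod_hom_def)
  have "\<exists>h. bimod_hom regular_bimod (tens_square_bimod sm) h \<and> (\<forall>a. mult_tens sm (class_rep (h a)) = a)"
    by (rule assms[unfolded projective_regular_def, rule_format, of "tens_square_bimod sm" regular_bimod])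
      (use bimodule_tens_square_bimod bimodule_regular_bimod bimod_hom_mult_tens_square
        mult_tens_square_onto id_hom in simp)
  then show ?thesis
    using normalized_nearly_frobenius_of_section by blast
qed

end

theorem theorem34:
  fixes sm :: "'k::field \<Rightarrow> 'a::ring_1 \<Rightarrow> 'a"
  assumes "kalgebra sm"
  shows "(projective_regular sm TYPE(('a list \<Rightarrow> 'k) set) TYPE('a)
            \<longleftrightarrow> (\<exists>D. normalized_nearly_frobenius sm D))
       \<and> ((\<exists>D. normalized_nearly_frobenius sm D) \<longrightarrow> projective_regular sm TYPE('m) TYPE('n))"
proof -
  interpret k_algebra sm
    by (rule k_algebra.intro[OF assms])
  show ?thesis
    using normalized_nearly_frobenius_if_projective
      projective_regular_if_normalized_nearly_frobenius[where 'm = "('a list \<Rightarrow> 'k) set" and 'n = 'a]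
      projective_regular_if_normalized_nearly_frobenius[where 'm = 'm and 'n = 'n]
    by blast
qed

end
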